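(* Let $\mathcal U,\mathcal V,\mathcal X$ be real finite-dimensional Euclidean spaces, $\mathcal F:\mathcal X\to\mathcal U$ and $\mathcal G:\mathcal X\to\mathcal V$ linear maps, $\sigma>0$, $\Sigma_f$ a self-adjoint positive semidefinite linear operator on $\mathcal U$, and $\Sigma_g$ a self-adjoint positive semidefinite linear operator on $\mathcal V$. Let $\mathcal E_g$ be a self-adjoint positive definite linear operator on $\mathcal V$ with $\mathcal E_g\succeq \sigma^{-1}\Sigma_g+\mathcal G\mathcal G^*$, and set $\mathcal T_g:=\mathcal E_g-\sigma^{-1}\Sigma_g-\mathcal G\mathcal G^*\succeq 0$. Let $\mathcal T_f$ be a self-adjoint positive semidefinite linear operator on $\mathcal U$ and set $\widehat{\mathcal T}_f:=\mathcal T_f+\mathcal F\mathcal G^*\mathcal E_g^{-1}\mathcal G\mathcal F^*$. Let $\mathcal H:\mathcal X\to\mathcal U\times\mathcal V$, $\mathcal Hx=(\mathcal Fx,\mathcal Gx)$. Then $$\mathcal W:=\mathcal H\mathcal H^*+\sigma^{-1}\begin{pmatrix}\Sigma_f&0\\0&\Sigma_g\end{pmatrix}+\begin{pmatrix}\widehat{\mathcal T}_f&0\\0&\mathcal T_g\end{pmatrix}\succ 0 \iff \mathcal F\mathcal F^*+\sigma^{-1}\Sigma_f+\mathcal T_f\succ 0 .$$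
   Context: $\succ 0$ ($\succeq 0$) means positive definite (semidefinite) for self-adjoint operators; $\mathcal A\succeq\mathcal B$ means $\mathcal A-\mathcal B\succeq 0$. In the paper, $\Sigma_f$ is the operator with $\langle \xi-\tilde\xi,u-\tilde u\rangle\ge\|u-\tilde u\|^2_{\Sigma_f}$ for all $u,\tilde u\in\mathrm{dom} f$, $\xi\in\partial f(u)$, $\tilde\xi\in\partial f(\tilde u)$ for a closed proper convex $f$, and $\Sigma_g$ is the Hessian of a convex quadratic $g(v)=\frac12\langle v,\Sigma_g v\rangle-\langle b,v\rangle$. *)

theory Defs
  imports "HOL-Analysis.Analysis"
begin

definition self_adjoint_op :: "('a::euclidean_space \<Rightarrow> 'a) \<Rightarrow> bool" where
  "self_adjoint_op A \<longleftrightarrow> linear A \<and> (\<forall>x y. inner (A x) y = inner x (A y))"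

definition psd_op :: "('a::euclidean_space \<Rightarrow> 'a) \<Rightarrow> bool" where
  "psd_op A \<longleftrightarrow> self_adjoint_op A \<and> (\<forall>x. 0 \<le> inner x (A x))"

definition pd_op :: "('a::euclidean_space \<Rightarrow> 'a) \<Rightarrow> bool" where
  "pd_op A \<longleftrightarrow> self_adjoint_op A \<and> (\<forall>x. x \<noteq> 0 \<longrightarrow> 0 < inner x (A x))"

end

theory Submission imports Defs begin

text \<open>Write \<open>R = F F\<^sup>* + S\<close> with \<open>S = \<sigma>\<^sup>-\<^sup>1 \<Sigma>\<^sub>f + T\<^sub>f\<close>, and note that
  \<open>\<sigma>\<^sup>-\<^sup>1 \<Sigma>\<^sub>g + T\<^sub>g = E\<^sub>g - G G\<^sup>*\<close>. Completing the square with respect to \<open>E\<^sub>g\<close> gives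
  \<open>\<langle>(u,v), W (u,v)\<rangle> = \<langle>u, R u\<rangle> + \<langle>v + z, E\<^sub>g (v + z)\<rangle>\<close> with \<open>z = E\<^sub>g\<^sup>-\<^sup>1 G F\<^sup>* u\<close>.
  Since \<open>E\<^sub>g \<succ> 0\<close> and \<open>v\<close> is free, \<open>W\<close> is positive definite exactly when \<open>R\<close> is.\<close>

lemma self_adjoint_op_add:
  "self_adjoint_op A \<Longrightarrow> self_adjoint_op B \<Longrightarrow> self_adjoint_op (\<lambda>x. A x + B x)"
  unfolding self_adjoint_op_def by (simp add: linear_compose_add inner_add_left inner_add_right)

lemma self_adjoint_op_diff:
  "self_adjoint_op A \<Longrightarrow> self_adjoint_op B \<Longrightarrow> self_adjoint_op (\<lambda>x. A x - B x)"
  unfolding self_adjoint_op_def by (simp add: linear_compose_sub inner_diff_left inner_diff_right)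

lemma self_adjoint_op_scaleR: "self_adjoint_op A \<Longrightarrow> self_adjoint_op (\<lambda>x. c *\<^sub>R A x)"
  unfolding self_adjoint_op_def by (simp add: linear_compose_scale_right)

lemma self_adjoint_op_id: "self_adjoint_op (\<lambda>x::'a::euclidean_space. x)"
  unfolding self_adjoint_op_def using linear_id[unfolded id_def] by simp

lemma self_adjoint_op_conj:
  fixes A :: "'a::euclidean_space \<Rightarrow> 'b::euclidean_space"
  assumes A: "linear A" and B: "self_adjoint_op B"
  shows "self_adjoint_op (\<lambda>x. A (B (adjoint A x)))"
proof -
  have lB: "linear B" and symB: "\<And>x y. inner (B x) y = inner x (B y)"
    using B unfolding self_adjoint_op_def by auto
  have "linear (A \<circ> B \<circ> adjoint A)"
    by (intro linear_compose A lB adjoint_linear)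
  moreover have "inner (A (B (adjoint A x))) y = inner x (A (B (adjoint A y)))" for x y
  proof -
    have "inner (A (B (adjoint A x))) y = inner (B (adjoint A x)) (adjoint A y)"
      by (simp add: adjoint_clauses(1)[OF A])
    also have "\<dots> = inner (adjoint A x) (B (adjoint A y))"
      by (rule symB)
    also have "\<dots> = inner x (A (B (adjoint A y)))"
      by (simp add: adjoint_clauses(2)[OF A])
    finally show ?thesis .
  qed
  ultimately show ?thesis unfolding self_adjoint_op_def by (simp add: o_def)
qed

lemma self_adjoint_op_prod:
  fixes A :: "'a::euclidean_space \<Rightarrow> 'a" and B :: "'b::euclidean_space \<Rightarrow> 'b"
  assumes "self_adjoint_op A" "self_adjoint_op B"
  shows "self_adjoint_op (\<lambda>w. (A (fst w), B (snd w)))"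
  using assms unfolding self_adjoint_op_def linear_iff by (simp add: linear_add linear_cmul)

lemma pd_op_inv:
  fixes E :: "'a::euclidean_space \<Rightarrow> 'a"
  assumes "pd_op E"
  shows pd_op_inv_right: "E (inv E y) = y"
    and self_adjoint_op_inv: "self_adjoint_op (inv E)"
proof -
  have lE: "linear E" and symE: "\<And>x y. inner (E x) y = inner x (E y)"
    and pos: "\<And>x. x \<noteq> 0 \<Longrightarrow> 0 < inner x (E x)"
    using assms unfolding pd_op_def self_adjoint_op_def by auto
  have "inj E"
    using pos by (metis linear_injective_0[OF lE] inner_zero_right less_irrefl)
  then obtain f where f: "linear f" "\<And>x. f (E x) = x" "\<And>x. E (f x) = x"
    using linear_injective_isomorphism[OF lE] by blast
  have "inv E = f"
    by (rule ext) (metis f(3) \<open>inj E\<close> inv_f_f)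
  then show "E (inv E y) = y" and "self_adjoint_op (inv E)"
    unfolding self_adjoint_op_def using f symE by metis+
qed

lemma adjoint_pair:
  fixes F :: "'x::euclidean_space \<Rightarrow> 'u::euclidean_space" and G :: "'x \<Rightarrow> 'v::euclidean_space"
  assumes "linear F" "linear G"
  shows "adjoint (\<lambda>x. (F x, G x)) = (\<lambda>w. adjoint F (fst w) + adjoint G (snd w))"
  by (rule adjoint_unique)
     (simp add: adjoint_clauses[OF assms(1)] adjoint_clauses[OF assms(2)] inner_add_right)

lemma positive_iff_completed_square:
  fixes a :: "'u::zero \<Rightarrow> real" and b :: "'v::real_vector \<Rightarrow> real"
  assumes a0: "a 0 = 0" and L0: "L 0 = 0" and b: "\<And>v. v \<noteq> 0 \<Longrightarrow> 0 < b v" and b0: "b 0 = 0"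
  shows "(\<forall>w. w \<noteq> 0 \<longrightarrow> 0 < a (fst w) + b (snd w + L (fst w)))
     \<longleftrightarrow> (\<forall>u. u \<noteq> 0 \<longrightarrow> 0 < a u)"
proof
  assume pos: "\<forall>w. w \<noteq> 0 \<longrightarrow> 0 < a (fst w) + b (snd w + L (fst w))"
  show "\<forall>u. u \<noteq> 0 \<longrightarrow> 0 < a u"
  proof (intro allI impI)
    fix u :: 'u
    assume "u \<noteq> 0"
    then have "(u, - L u) \<noteq> 0"
      by (simp add: zero_prod_def)
    with pos b0 show "0 < a u"
      by fastforce
  qed
next
  assume a: "\<forall>u. u \<noteq> 0 \<longrightarrow> 0 < a u"
  have b_nonneg: "0 \<le> b v" for v
    using b b0 by (cases "v = 0") (auto intro: less_imp_le)
  show "\<forall>w. w \<noteq> 0 \<longrightarrow> 0 < a (fst w) + b (snd w + L (fst w))"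
  proof (intro allI impI)
    fix w :: "'u \<times> 'v"
    assume w: "w \<noteq> 0"
    show "0 < a (fst w) + b (snd w + L (fst w))"
    proof (cases "fst w = 0")
      case True
      then have "snd w \<noteq> 0"
        using w by (simp add: prod_eq_iff)
      with True a0 L0 b show ?thesis
        by simp
    next
      case False
      with a b_nonneg show ?thesis
        by (simp add: add_pos_nonneg)
    qed
  qed
qed

definition schur_block_op ::
    "('x::euclidean_space \<Rightarrow> 'u::euclidean_space) \<Rightarrow> ('x \<Rightarrow> 'v::euclidean_space)
      \<Rightarrow> ('u \<Rightarrow> 'u) \<Rightarrow> ('v \<Rightarrow> 'v) \<Rightarrow> 'u \<times> 'v \<Rightarrow> 'u \<times> 'v" where
  "schur_block_op F G S E w =
     (F (adjoint F (fst w) + adjoint G (snd w)) + S (fst w) + F (adjoint G (inv E (G (adjoint F (fst w))))),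
      G (adjoint F (fst w) + adjoint G (snd w)) + E (snd w) - G (adjoint G (snd w)))"

context
  fixes F :: "'x::euclidean_space \<Rightarrow> 'u::euclidean_space"
    and G :: "'x \<Rightarrow> 'v::euclidean_space"
    and S :: "'u \<Rightarrow> 'u" and E :: "'v \<Rightarrow> 'v"
  assumes F: "linear F" and G: "linear G" and S: "self_adjoint_op S" and E: "pd_op E"
begin

lemma inner_schur_block_op:
  "inner w (schur_block_op F G S E w)
     = inner (fst w) (F (adjoint F (fst w)) + S (fst w))
       + inner (snd w + inv E (G (adjoint F (fst w)))) (E (snd w + inv E (G (adjoint F (fst w)))))"
proof -
  obtain u v where w: "w = (u, v)" by fastforce
  define p where "p = adjoint F u"
  define q where "q = adjoint G v"
  define z where "z = inv E (G p)"
  have symE: "inner (E x) y = inner x (E y)" and lE: "linear E" for x y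
    using E unfolding pd_op_def self_adjoint_op_def by auto
  have Ez: "E z = G p"
    unfolding z_def using pd_op_inv_right[OF E] .
  have hF: "inner u (F x) = inner p x" for x
    unfolding p_def by (simp add: adjoint_clauses(2)[OF F])
  have hG: "inner v (G x) = inner q x" for x
    unfolding q_def by (simp add: adjoint_clauses(2)[OF G])
  have hG': "inner p (adjoint G x) = inner (G p) x" for x
    by (simp add: adjoint_clauses(1)[OF G])
  have "schur_block_op F G S E w = (F (p + q) + S u + F (adjoint G z), G (p + q) + E v - G q)"
    unfolding w schur_block_op_def p_def q_def z_def by simp
  then have "inner w (schur_block_op F G S E w)
      = inner p (p + q) + inner u (S u) + inner (G p) z + inner q (p + q) + inner v (E v) - inner q q"
    unfolding w by (simp add: inner_add_right inner_diff_right hF hG hG')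
  also have "\<dots> = inner p p + inner u (S u) + inner v (E v) + 2 * inner v (G p) + inner z (G p)"
    by (simp add: hG inner_add_right inner_commute)
  also have "\<dots> = inner u (F p + S u) + inner (v + z) (E (v + z))"
    using symE[of v z] Ez
    by (simp add: hF linear_add[OF lE] inner_add_left inner_add_right inner_commute)
  finally show ?thesis
    unfolding w p_def z_def by simp
qed

lemma self_adjoint_op_schur_block_op: "self_adjoint_op (schur_block_op F G S E)"
proof -
  define H where "H = (\<lambda>x. (F x, G x))"
  define D1 where "D1 = (\<lambda>u. S u + F (adjoint G (inv E (G (adjoint F u)))))"
  define D2 where "D2 = (\<lambda>v. E v - G (adjoint G v))"
  have "linear H"
    using F G unfolding H_def linear_iff by (simp add: linear_add linear_cmul)
  then have "self_adjoint_op (\<lambda>w. H (adjoint H w))"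
    using self_adjoint_op_conj self_adjoint_op_id by blast
  moreover have "self_adjoint_op D1"
    using self_adjoint_op_add[OF S self_adjoint_op_conj[OF F
        self_adjoint_op_conj[OF adjoint_linear[OF G] self_adjoint_op_inv[OF E]]]]
    unfolding D1_def adjoint_adjoint[OF G] .
  moreover have "self_adjoint_op D2"
    using self_adjoint_op_diff[OF _ self_adjoint_op_conj[OF G self_adjoint_op_id]] E
    unfolding D2_def pd_op_def by blast
  ultimately have "self_adjoint_op (\<lambda>w. H (adjoint H w) + (D1 (fst w), D2 (snd w)))"
    by (intro self_adjoint_op_add self_adjoint_op_prod)
  moreover have "schur_block_op F G S E = (\<lambda>w. H (adjoint H w) + (D1 (fst w), D2 (snd w)))"
    by (intro ext) (simp add: schur_block_op_def H_def D1_def D2_def adjoint_pair[OF F G])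
  ultimately show ?thesis
    by simp
qed

lemma pd_op_schur_block_op_iff: "pd_op (schur_block_op F G S E) \<longleftrightarrow> pd_op (\<lambda>u. F (adjoint F u) + S u)"
proof -
  have posE: "\<And>v. v \<noteq> 0 \<Longrightarrow> 0 < inner v (E v)"
    using E unfolding pd_op_def by auto
  have "linear (inv E \<circ> G \<circ> adjoint F)"
    using self_adjoint_op_inv[OF E] G adjoint_linear[OF F]
    unfolding self_adjoint_op_def by (blast intro: linear_compose)
  then have shift0: "inv E (G (adjoint F 0)) = 0"
    using linear_0 by fastforce
  have "self_adjoint_op (\<lambda>u. F (adjoint F u) + S u)"
    by (intro self_adjoint_op_add self_adjoint_op_conj F self_adjoint_op_id S)
  with shift0 show ?thesis
    unfolding pd_op_def inner_schur_block_op
    using self_adjoint_op_schur_block_op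
      positive_iff_completed_square[where a = "\<lambda>u. inner u (F (adjoint F u) + S u)"
        and b = "\<lambda>v. inner v (E v)" and L = "\<lambda>u. inv E (G (adjoint F u))"]
    by (simp add: posE)
qed

end

theorem proposition2p1:
  fixes F :: "'x::euclidean_space \<Rightarrow> 'u::euclidean_space"
    and G :: "'x \<Rightarrow> 'v::euclidean_space"
    and \<sigma> :: real
    and Sf Tf :: "'u \<Rightarrow> 'u"
    and Sg Eg :: "'v \<Rightarrow> 'v"
  assumes F: "linear F" and G: "linear G"
    and sigma: "\<sigma> > 0"
    and Sf: "psd_op Sf" and Sg: "psd_op Sg"
    and Eg: "pd_op Eg"
    and Eg_ge: "psd_op (\<lambda>v. Eg v - (inverse \<sigma> *\<^sub>R Sg v + G (adjoint G v)))"
    and Tf: "psd_op Tf"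
  defines "Tg \<equiv> (\<lambda>v. Eg v - inverse \<sigma> *\<^sub>R Sg v - G (adjoint G v))"
    and "Tfh \<equiv> (\<lambda>u. Tf u + F (adjoint G (inv Eg (G (adjoint F u)))))"
    and "H \<equiv> (\<lambda>x. (F x, G x))"
  defines "W \<equiv> (\<lambda>w::'u \<times> 'v. H (adjoint H w)
                 + inverse \<sigma> *\<^sub>R (Sf (fst w), Sg (snd w))
                 + (Tfh (fst w), Tg (snd w)))"
  shows "pd_op W \<longleftrightarrow> pd_op (\<lambda>u. F (adjoint F u) + inverse \<sigma> *\<^sub>R Sf u + Tf u)"
proof -
  define S where "S = (\<lambda>u. inverse \<sigma> *\<^sub>R Sf u + Tf u)"
  have S: "self_adjoint_op S"
    unfolding S_def using Sf Tf
    by (simp add: psd_op_def self_adjoint_op_add self_adjoint_op_scaleR)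
  have "W = schur_block_op F G S Eg"
    by (intro ext)
       (simp add: W_def H_def Tg_def Tfh_def S_def schur_block_op_def adjoint_pair[OF F G] algebra_simps)
  then show ?thesis
    using pd_op_schur_block_op_iff[OF F G S Eg] by (simp add: S_def add.assoc)
qed

end
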